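(* For every $n\ge 2$ and every Greene–Kleitman chain $C$ in $Q_n$ with $|C|\ge 2$, the chains $\ell( *C* )$ and $\ell( *f(C)* )$ are connected at their bottom ends in $Q_{n+2}$. Specifically, if $|C|=2$ and $C=u*v*w$ with $u,v,w\in D$, then $\ell( *C* )=*\,u\,*\,v\,0\,w\,1$ and $\ell( *f(C)* )=0\,u\,0\,v\,1\,w\,1$; and if $|C|\ge 3$ and $C=C'*u$ with $u\in D$ and $C'$ containing at least two $*$s, then $\ell( *C* )=*\,C'\,0\,u\,1$ and $\ell( *f(C)* )=*\,f(C')\,0\,u\,1$. Consequently, in the first case the chains $\ell( *C* )$ and $\ell( *f(C)* )$ differ in exactly three positions, and in the second case they differ in exactly two positions.
   Context: $Q_n$ is the hypercube on $\{0,1\}^n$. Let $D$ be the set of bitstrings (including the empty string) with equally many $0$s and $1$s such that every prefix has at least as many $0$s as $1$s. A Greene–Kleitman chain in $Q_n$ is a string of length $n$ over $\{0,1,*\}$ of the form $u_0*u_1*\cdots*u_{h-1}*u_h$ with all $u_j\in D$, representing the path whose vertices are obtained by replacing the $*$s by $i$ ones followed by $h-i$ zeros; $|C|=h$ is its number of $*$s, and its bottom end $b(C)$ is obtained by replacing all $*$s by $0$. For a string $C$ over $\{0,1,*\}$ with at least two $*$s, $f(C)$ (resp. $\ell(C)$) is obtained by replacing the first two (resp. last two) $*$s by $0$ and $1$, respectively. Juxtaposition denotes concatenation. Two chains are connected at their bottom ends if their bottom ends differ in exactly one position. *)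

theory Defs
  imports Main
begin

datatype sym = Zero | One | Star

definition cnt :: "sym \<Rightarrow> sym list \<Rightarrow> nat" where
  "cnt a xs = length (filter (\<lambda>x. x = a) xs)"

definition inD :: "sym list \<Rightarrow> bool" where
  "inD u \<longleftrightarrow> set u \<subseteq> {Zero, One} \<and> cnt Zero u = cnt One u \<and>
     (\<forall>k \<le> length u. cnt One (take k u) \<le> cnt Zero (take k u))"

fun join :: "sym list list \<Rightarrow> sym list" where
  "join [] = []"
| "join [u] = u"
| "join (u # us) = u @ Star # join us"

definition gk_chain :: "nat \<Rightarrow> sym list \<Rightarrow> bool" where
  "gk_chain n C \<longleftrightarrow> length C = n \<and> (\<exists>us. us \<noteq> [] \<and> (\<forall>u\<in>set us. inD u) \<and> C = join us)"

text \<open>Number of stars |C|.\<close>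
definition stars :: "sym list \<Rightarrow> nat" where
  "stars C = cnt Star C"

definition bot :: "sym list \<Rightarrow> sym list" where
  "bot C = map (\<lambda>x. if x = Star then Zero else x) C"

fun rep2 :: "sym \<Rightarrow> sym \<Rightarrow> nat \<Rightarrow> sym list \<Rightarrow> sym list" where
  "rep2 a b k [] = []"
| "rep2 a b k (x # xs) =
     (if x = Star \<and> k < 2 then (if k = 0 then a else b) # rep2 a b (Suc k) xs
      else x # rep2 a b k xs)"

definition fC :: "sym list \<Rightarrow> sym list" where
  "fC C = rep2 Zero One 0 C"

text \<open>l(C): replace the last two stars by 0 and 1, respectively (i.e. scanning from the
  right, the last star becomes 1 and the second-to-last becomes 0).\<close>
definition lC :: "sym list \<Rightarrow> sym list" where
  "lC C = rev (rep2 One Zero 0 (rev C))"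

definition ndiff :: "sym list \<Rightarrow> sym list \<Rightarrow> nat" where
  "ndiff x y = card {i. i < length x \<and> x ! i \<noteq> y ! i}"

definition connected_bot :: "sym list \<Rightarrow> sym list \<Rightarrow> bool" where
  "connected_bot C1 C2 \<longleftrightarrow> length C1 = length C2 \<and> ndiff (bot C1) (bot C2) = 1"

end

theory Submission
  imports Defs
begin

text \<open>Write \<open>C = u\<^sub>0 * \<dots> * u\<^sub>h\<close>. In \<open>*C*\<close>, the map \<open>\<ell>\<close> replaces the last star of \<open>C\<close> and the
  appended star by \<open>0\<close> and \<open>1\<close>, turning the last block into \<open>0 u\<^sub>h 1 \<in> D\<close>, which merges with
  the preceding block; the prepended star opens an empty first block. Hence the result is again a
  Greene--Kleitman chain, and so is the one obtained from \<open>f(C) = u\<^sub>0 0 u\<^sub>1 1 u\<^sub>2 * \<dots>\<close>, as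
  \<open>u\<^sub>0 0 u\<^sub>1 1 u\<^sub>2 \<in> D\<close>. For \<open>h \<ge> 3\<close>, \<open>f\<close> and \<open>\<ell>\<close> act on disjoint stars, so the two chains
  differ exactly where \<open>f\<close> changed \<open>C\<close>, and their bottom ends only at the second star of \<open>C\<close>,
  which \<open>f\<close> turns into \<open>1\<close>. For \<open>h = 2\<close>, \<open>\<ell>\<close> uses the second star of \<open>C\<close> in one chain but the
  prepended star in the other, giving a third difference which disappears in the bottom ends.\<close>

lemma cnt_Nil [simp]: "cnt a [] = 0"
  by (simp add: cnt_def)

lemma cnt_Cons [simp]: "cnt a (x # xs) = (if x = a then 1 else 0) + cnt a xs"
  by (simp add: cnt_def)

lemma cnt_append [simp]: "cnt a (xs @ ys) = cnt a xs + cnt a ys"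
  by (simp add: cnt_def)

lemma cnt_rev [simp]: "cnt a (rev xs) = cnt a xs"
  by (simp add: cnt_def rev_filter [symmetric])

lemma cnt_eq_0_iff: "cnt a xs = 0 \<longleftrightarrow> a \<notin> set xs"
  by (induction xs) auto

lemma inD_imp_Star_notin: "inD u \<Longrightarrow> Star \<notin> set u"
  unfolding inD_def by auto

lemma inD_take_balanced:
  assumes "inD u"
  shows "cnt One (take k u) \<le> cnt Zero (take k u)"
proof -
  have "take k u = take (min k (length u)) u"
    by (simp add: min_def)
  with assms show ?thesis
    unfolding inD_def by (metis min.cobounded2)
qed

lemma inD_Nil [simp]: "inD []"
  unfolding inD_def by simp

lemma inD_append:
  assumes "inD u" and "inD v"
  shows "inD (u @ v)"
proof -
  have "cnt One (take k (u @ v)) \<le> cnt Zero (take k (u @ v))" for k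
  proof (cases "k \<le> length u")
    case True
    then show ?thesis using inD_take_balanced [OF assms(1), of k] by simp
  next
    case False
    then show ?thesis using inD_take_balanced [OF assms(2), of "k - length u"] assms(1)
      unfolding inD_def by simp
  qed
  with assms show ?thesis
    unfolding inD_def by auto
qed

lemma inD_Zero_One_wrap:
  assumes "inD u"
  shows "inD (Zero # u @ [One])"
proof -
  have "cnt One (take k (Zero # u @ [One])) \<le> cnt Zero (take k (Zero # u @ [One]))" for k
  proof (cases k)
    case 0
    then show ?thesis by simp
  next
    case (Suc j)
    have "cnt One (take (j - length u) [One]) \<le> 1"
      by (cases "j - length u") auto
    with Suc show ?thesis using inD_take_balanced [OF assms, of j] by simp
  qed
  with assms show ?thesis
    unfolding inD_def by auto
qed

lemma length_rep2 [simp]: "length (rep2 a b k xs) = length xs"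
  by (induction xs arbitrary: k) auto

lemma rep2_Star_notin: "Star \<notin> set xs \<Longrightarrow> rep2 a b k xs = xs"
  by (induction xs arbitrary: k) auto

lemma rep2_exhausted: "2 \<le> k \<Longrightarrow> rep2 a b k xs = xs"
  by (induction xs arbitrary: k) auto

lemma rep2_append:
  "rep2 a b k (xs @ ys) =
     rep2 a b k xs @ rep2 a b (if 2 \<le> k then k else min 2 (k + cnt Star xs)) ys"
  by (induction xs arbitrary: k) (auto simp: rep2_exhausted)

lemma length_lC [simp]: "length (lC C) = length C"
  by (simp add: lC_def)

lemma length_fC [simp]: "length (fC C) = length C"
  by (simp add: fC_def)

lemma fC_append_two_Stars: "2 \<le> cnt Star xs \<Longrightarrow> fC (xs @ ys) = fC xs @ ys"
  unfolding fC_def by (simp add: rep2_append rep2_exhausted)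

lemma fC_three_blocks:
  "Star \<notin> set u \<Longrightarrow> Star \<notin> set v \<Longrightarrow> fC (u @ Star # v @ Star # w) = u @ Zero # v @ One # w"
  unfolding fC_def by (simp add: rep2_append rep2_Star_notin rep2_exhausted cnt_eq_0_iff [symmetric])

lemma lC_last_block: "Star \<notin> set u \<Longrightarrow> lC (X @ Star # u @ [Star]) = X @ Zero # u @ [One]"
  unfolding lC_def by (simp add: rep2_append rep2_Star_notin rep2_exhausted cnt_eq_0_iff [symmetric])

lemma lC_single_block: "Star \<notin> set u \<Longrightarrow> lC (Star # u @ [Star]) = Zero # u @ [One]"
  using lC_last_block [of u "[]"] by simp

lemma ndiff_Nil [simp]: "ndiff [] ys = 0"
  by (simp add: ndiff_def)

lemma ndiff_Cons [simp]: "ndiff (x # xs) (y # ys) = (if x = y then 0 else 1) + ndiff xs ys"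
proof -
  have "{i. i < length (x # xs) \<and> (x # xs) ! i \<noteq> (y # ys) ! i} =
      (if x = y then {} else {0}) \<union> Suc ` {i. i < length xs \<and> xs ! i \<noteq> ys ! i}"
    by (rule set_eqI) (auto simp: nth_Cons split: nat.splits)
  then show ?thesis
    unfolding ndiff_def by (simp add: card_image)
qed

lemma ndiff_append:
  "length xs = length xs' \<Longrightarrow> ndiff (xs @ ys) (xs' @ ys') = ndiff xs xs' + ndiff ys ys'"
proof (induction xs arbitrary: xs')
  case Nil
  then show ?case by simp
next
  case (Cons x xs)
  then show ?case by (cases xs') auto
qed

lemma ndiff_self [simp]: "ndiff xs xs = 0"
  by (induction xs) auto

lemma bot_Nil [simp]: "bot [] = []"
  and bot_Cons [simp]: "bot (x # xs) = (if x = Star then Zero else x) # bot xs"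
  and bot_append [simp]: "bot (xs @ ys) = bot xs @ bot ys"
  and length_bot [simp]: "length (bot xs) = length xs"
  by (auto simp: bot_def)

lemma ndiff_rep2:
  "k \<le> 2 \<Longrightarrow> a \<noteq> Star \<Longrightarrow> b \<noteq> Star \<Longrightarrow> ndiff xs (rep2 a b k xs) = min (2 - k) (cnt Star xs)"
  by (induction xs arbitrary: k) (auto simp: rep2_exhausted)

lemma ndiff_bot_rep2:
  "k \<le> 2 \<Longrightarrow> ndiff (bot xs) (bot (rep2 Zero One k xs)) = (if k \<le> 1 \<and> 2 \<le> k + cnt Star xs then 1 else 0)"
  by (induction xs arbitrary: k) (auto simp: rep2_exhausted)

lemma ndiff_fC: "2 \<le> cnt Star C \<Longrightarrow> ndiff C (fC C) = 2"
  using ndiff_rep2 [of 0 Zero One C] by (simp add: fC_def)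

lemma ndiff_bot_fC: "2 \<le> cnt Star C \<Longrightarrow> ndiff (bot C) (bot (fC C)) = 1"
  using ndiff_bot_rep2 [of 0 C] by (simp add: fC_def)

lemma join_Cons_nonempty: "us \<noteq> [] \<Longrightarrow> join (u # us) = u @ Star # join us"
  by (cases us) auto

lemma join_snoc: "us \<noteq> [] \<Longrightarrow> join (us @ [u]) = join us @ Star # u"
  by (induction us rule: join.induct) auto

lemma join_append_first: "join ((x @ y) # us) = x @ join (y # us)"
  by (cases us) auto

lemma join_append_last: "join (us @ [x]) @ y = join (us @ [x @ y])"
  by (induction us rule: join.induct) (auto simp: join_Cons_nonempty)

lemma stars_join: "\<forall>u\<in>set us. Star \<notin> set u \<Longrightarrow> stars (join us) = length us - 1"
  unfolding stars_def by (induction us rule: join.induct) (auto simp: cnt_eq_0_iff)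

lemma stars_join_inD:
  assumes "\<forall>u\<in>set us. inD u"
  shows "stars (join us) = length us - 1"
  using assms inD_imp_Star_notin stars_join by blast

lemma gk_chain_lC_wrap:
  assumes "gk_chain n C"
  shows "gk_chain (n + 2) (lC (Star # C @ [Star]))"
proof -
  obtain us where us: "us \<noteq> []" "\<forall>u\<in>set us. inD u" "C = join us" "length C = n"
    using assms unfolding gk_chain_def by blast
  then obtain us0 w where us_snoc: "us = us0 @ [w]"
    by (cases us rule: rev_cases) auto
  have w: "inD w" "Star \<notin> set w"
    using us(2) us_snoc inD_imp_Star_notin by auto
  have "\<exists>vs. vs \<noteq> [] \<and> (\<forall>v\<in>set vs. inD v) \<and> lC (Star # C @ [Star]) = join vs"
  proof (cases us0 rule: rev_cases)
    case Nil
    then have "lC (Star # C @ [Star]) = join [Zero # w @ [One]]"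
      using us(3) us_snoc w(2) by (simp add: lC_single_block)
    then show ?thesis
      using inD_Zero_One_wrap [OF w(1)] by (intro exI [of _ "[Zero # w @ [One]]"]) auto
  next
    case (snoc vs v)
    have "lC (Star # C @ [Star]) = Star # join (vs @ [v]) @ Zero # w @ [One]"
      using us(3) us_snoc snoc w(2) lC_last_block [of w "Star # join us0"] join_snoc [of "vs @ [v]" w]
      by simp
    also have "\<dots> = join ([] # vs @ [v @ Zero # w @ [One]])"
      by (simp add: join_append_last join_Cons_nonempty)
    finally show ?thesis
      using us(2) us_snoc snoc inD_append [OF _ inD_Zero_One_wrap [OF w(1)]]
      by (intro exI [of _ "[] # vs @ [v @ Zero # w @ [One]]"]) auto
  qed
  with us(4) show ?thesis
    unfolding gk_chain_def by simp
qed

lemma gk_chain_fC: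
  assumes "gk_chain n C" and "2 \<le> stars C"
  shows "gk_chain n (fC C)"
proof -
  obtain us where us: "\<forall>u\<in>set us. inD u" "C = join us" "length C = n"
    using assms(1) unfolding gk_chain_def by blast
  with assms(2) have "3 \<le> length us"
    using stars_join_inD by fastforce
  then obtain u v w rest where us_eq: "us = u # v # w # rest"
    by (metis Suc_le_length_iff numeral_3_eq_3)
  then have uvw: "inD u" "inD v" "inD w" "\<forall>x\<in>set rest. inD x"
    using us(1) by auto
  have "fC C = fC (u @ Star # v @ Star # join (w # rest))"
    using us(2) us_eq by simp
  also have "\<dots> = join (((u @ Zero # v @ [One]) @ w) # rest)"
    using uvw inD_imp_Star_notin join_append_first [of "u @ Zero # v @ [One]" w rest]
    by (simp add: fC_three_blocks)
  finally have "fC C = join ((u @ Zero # v @ One # w) # rest)"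
    by simp
  moreover have "inD (u @ Zero # v @ One # w)"
    using inD_append [OF uvw(1) inD_append [OF inD_Zero_One_wrap [OF uvw(2)] uvw(3)]] by simp
  moreover have "length (fC C) = n"
    using us(3) by simp
  ultimately show ?thesis
    using uvw(4) unfolding gk_chain_def
    by (auto intro!: exI [of _ "(u @ Zero # v @ One # w) # rest"])
qed

lemma lC_wrap_fC_three_blocks:
  assumes "inD u" "inD v" "inD w" and C: "C = u @ Star # v @ Star # w"
  shows "lC (Star # C @ [Star]) = Star # u @ Star # v @ Zero # w @ [One]"
    and "lC (Star # fC C @ [Star]) = Zero # u @ Zero # v @ One # w @ [One]"
    and "ndiff (lC (Star # C @ [Star])) (lC (Star # fC C @ [Star])) = 3"
    and "connected_bot (lC (Star # C @ [Star])) (lC (Star # fC C @ [Star]))"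
proof -
  have no_Star: "Star \<notin> set u" "Star \<notin> set v" "Star \<notin> set w"
    using assms inD_imp_Star_notin by auto
  show lC_C: "lC (Star # C @ [Star]) = Star # u @ Star # v @ Zero # w @ [One]"
    using lC_last_block [OF no_Star(3), of "Star # u @ Star # v"] C by simp
  show lC_fC: "lC (Star # fC C @ [Star]) = Zero # u @ Zero # v @ One # w @ [One]"
    using lC_single_block [of "u @ Zero # v @ One # w"] no_Star C by (simp add: fC_three_blocks)
  show "ndiff (lC (Star # C @ [Star])) (lC (Star # fC C @ [Star])) = 3"
    and "connected_bot (lC (Star # C @ [Star])) (lC (Star # fC C @ [Star]))"
    unfolding lC_C lC_fC connected_bot_def by (simp_all add: ndiff_append)
qed

lemma lC_wrap_fC_last_block:
  assumes "2 \<le> stars C'" "inD u" and C: "C = C' @ Star # u"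
  shows "lC (Star # C @ [Star]) = Star # C' @ Zero # u @ [One]"
    and "lC (Star # fC C @ [Star]) = Star # fC C' @ Zero # u @ [One]"
    and "ndiff (lC (Star # C @ [Star])) (lC (Star # fC C @ [Star])) = 2"
    and "connected_bot (lC (Star # C @ [Star])) (lC (Star # fC C @ [Star]))"
proof -
  have no_Star: "Star \<notin> set u"
    using assms(2) inD_imp_Star_notin by auto
  have two_Stars: "2 \<le> cnt Star C'"
    using assms(1) by (simp add: stars_def)
  show lC_C: "lC (Star # C @ [Star]) = Star # C' @ Zero # u @ [One]"
    using lC_last_block [OF no_Star, of "Star # C'"] C by simp
  show lC_fC: "lC (Star # fC C @ [Star]) = Star # fC C' @ Zero # u @ [One]"
    using lC_last_block [OF no_Star, of "Star # fC C'"] C fC_append_two_Stars [OF two_Stars]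
    by simp
  show "ndiff (lC (Star # C @ [Star])) (lC (Star # fC C @ [Star])) = 2"
    and "connected_bot (lC (Star # C @ [Star])) (lC (Star # fC C @ [Star]))"
    unfolding lC_C lC_fC connected_bot_def
    using ndiff_fC [OF two_Stars] ndiff_bot_fC [OF two_Stars]
    by (simp_all add: ndiff_append)
qed

lemma connected_bot_lC_wrap_fC:
  assumes "gk_chain n C" and "2 \<le> stars C"
  shows "connected_bot (lC (Star # C @ [Star])) (lC (Star # fC C @ [Star]))"
proof -
  obtain us where us: "\<forall>u\<in>set us. inD u" "C = join us"
    using assms(1) unfolding gk_chain_def by blast
  with assms(2) have len: "3 \<le> length us"
    using stars_join_inD by fastforce
  then obtain us0 w where us_snoc: "us = us0 @ [w]"
    by (cases us rule: rev_cases) auto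
  show ?thesis
  proof (cases "length us = 3")
    case True
    then obtain u v where "us = [u, v, w]"
      using us_snoc by (cases us0 rule: rev_cases) (auto simp: numeral_3_eq_3 length_Suc_conv)
    with us show ?thesis
      by (intro lC_wrap_fC_three_blocks(4) [of u v w]) auto
  next
    case False
    have "us0 \<noteq> []" "2 \<le> stars (join us0)"
      using us(1) us_snoc len False stars_join_inD [of us0] by auto
    with us us_snoc show ?thesis
      by (intro lC_wrap_fC_last_block(4) [of "join us0" w]) (auto simp: join_snoc)
  qed
qed

theorem lemma20:
  fixes n :: nat and C :: "sym list"
  assumes "n \<ge> 2" and "gk_chain n C" and "stars C \<ge> 2"
  shows "gk_chain (n + 2) (lC (Star # C @ [Star])) \<and> gk_chain (n + 2) (lC (Star # fC C @ [Star]))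
       \<and> connected_bot (lC (Star # C @ [Star])) (lC (Star # fC C @ [Star]))
       \<and> (\<forall>u v w. stars C = 2 \<longrightarrow> inD u \<longrightarrow> inD v \<longrightarrow> inD w \<longrightarrow> C = u @ Star # v @ Star # w \<longrightarrow>
            lC (Star # C @ [Star]) = Star # u @ Star # v @ Zero # w @ [One]
          \<and> lC (Star # fC C @ [Star]) = Zero # u @ Zero # v @ One # w @ [One]
          \<and> ndiff (lC (Star # C @ [Star])) (lC (Star # fC C @ [Star])) = 3)
       \<and> (\<forall>C' u. stars C \<ge> 3 \<longrightarrow> inD u \<longrightarrow> stars C' \<ge> 2 \<longrightarrow> C = C' @ Star # u \<longrightarrow>
            lC (Star # C @ [Star]) = Star # C' @ Zero # u @ [One]
          \<and> lC (Star # fC C @ [Star]) = Star # fC C' @ Zero # u @ [One]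
          \<and> ndiff (lC (Star # C @ [Star])) (lC (Star # fC C @ [Star])) = 2)"
  using gk_chain_lC_wrap [OF assms(2)] gk_chain_lC_wrap [OF gk_chain_fC [OF assms(2,3)]]
    connected_bot_lC_wrap_fC [OF assms(2,3)]
    lC_wrap_fC_three_blocks(1-3) lC_wrap_fC_last_block(1-3)
  by (intro conjI allI impI) simp_all

end
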